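(* Let $\lambda_2,\lambda_3$ be distinct nonzero complex numbers, $J_1^*=\mathrm{diag}(0,\lambda_2,\lambda_3)$, and $h>0$. Set $$\psi=1,\qquad \phi=\frac{(\lambda_2-\lambda_3)(e^{\lambda_2h}-1)(e^{\lambda_3h}-1)}{\lambda_2\lambda_3(e^{\lambda_2h}-e^{\lambda_3h})},\qquad \theta=\frac{\lambda_3(e^{\lambda_2h}-1)-\lambda_2(e^{\lambda_3h}-1)}{(\lambda_2-\lambda_3)(e^{\lambda_2h}-1)(e^{\lambda_3h}-1)}.$$ Then (whenever these expressions are defined and the scheme is uniquely solvable for $\mathbf{x}_{k+1}$) the difference scheme $$\frac{\mathbf{x}_{k+1}-\psi\mathbf{x}_k}{\phi}=J_1^*\big[\theta\mathbf{x}_{k+1}+(1-\theta)\mathbf{x}_k\big]$$ is exact for the system $\mathbf{x}'=J_1^*\mathbf{x}$.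
   Context: A one-step difference scheme with step size $h>0$ for $\mathbf{x}'=M\mathbf{x}$ is called exact if for every initial vector $\mathbf{x}_0$ the sequence $(\mathbf{x}_k)$ it generates satisfies $\mathbf{x}_k=\mathbf{x}(kh)$ for all $k\ge 0$, where $\mathbf{x}(t)$ solves $\mathbf{x}'=M\mathbf{x}$, $\mathbf{x}(0)=\mathbf{x}_0$. *)

theory Defs
  imports "HOL-Analysis.Analysis"
begin

definition lin_ode_solution ::
  "complex^'n^'n \<Rightarrow> complex^'n \<Rightarrow> (real \<Rightarrow> complex^'n) \<Rightarrow> bool" where
  "lin_ode_solution M x0 x \<longleftrightarrow>
     x 0 = x0 \<and> (\<forall>t. (x has_vector_derivative (M *v x t)) (at t))"

definition exact_scheme ::
  "(complex^'n \<Rightarrow> complex^'n \<Rightarrow> bool) \<Rightarrow> real \<Rightarrow> complex^'n^'n \<Rightarrow> bool" where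
  "exact_scheme S h M \<longleftrightarrow>
     (\<forall>x0 xs x. xs 0 = x0 \<and> (\<forall>k. S (xs k) (xs (Suc k))) \<and> lin_ode_solution M x0 x
        \<longrightarrow> (\<forall>k. xs k = x (real k * h)))"

definition diag3 :: "complex \<Rightarrow> complex \<Rightarrow> complex \<Rightarrow> complex^3^3" where
  "diag3 a b c = (\<chi> i j. if i = j then (vector [a, b, c] :: complex^3) $ i else 0)"

end

theory Submission
  imports Defs
begin

text \<open>The solution of x' = J x with J diagonal is x_i(t) = exp(t \<lambda>_i) x_i(0), so one step of
  length h multiplies the i-th component by e_i = exp(h \<lambda>_i).  The scheme acts
  componentwise as well, and on the i-th component it maps y to e_i y exactly when
  (e_i - 1) / \<phi> = \<lambda>_i (\<theta> (e_i - 1) + 1).  For \<lambda>_i = 0 this is trivial, and for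
  \<lambda>_2, \<lambda>_3 it is a rational identity which is precisely what the choice of \<phi> and \<theta>
  solves for.  Unique solvability then forces the generated sequence to be the
  exact one.\<close>

lemma has_vector_derivative_linear_imp_exp:
  fixes y :: "real \<Rightarrow> 'a::{banach, real_normed_field}"
  assumes deriv: "\<And>t. (y has_vector_derivative d * y t) (at t)"
  shows "y t = exp (t *\<^sub>R d) * y 0"
proof -
  have "((\<lambda>t. exp (t *\<^sub>R (-d)) * y t) has_vector_derivative 0) (at t within UNIV)" for t
  proof -
    have "((\<lambda>t. exp (t *\<^sub>R (-d)) * y t) has_vector_derivative
            exp (t *\<^sub>R (-d)) * (d * y t) + (-d * exp (t *\<^sub>R (-d))) * y t) (at t)"
      by (rule has_vector_derivative_mult[OF exp_scaleR_has_vector_derivative_left deriv])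
    then show ?thesis by (simp add: algebra_simps)
  qed
  then obtain c where c: "\<And>t. exp (t *\<^sub>R (-d)) * y t = c"
    using has_vector_derivative_zero_constant[of UNIV "\<lambda>t. exp (t *\<^sub>R (-d)) * y t"] by auto
  have "exp (t *\<^sub>R (-d)) * y t = y 0"
    using c[of t] c[of 0] by simp
  then have "exp (t *\<^sub>R d) * (exp (t *\<^sub>R (-d)) * y t) = exp (t *\<^sub>R d) * y 0"
    by simp
  then show ?thesis
    by (simp add: mult.assoc[symmetric] exp_add[symmetric] scaleR_right_diff_distrib[symmetric])
qed

lemma diag3_mult_vec_nth: "(diag3 a b c *v v) $ i = (vector [a, b, c] :: complex^3) $ i * v $ i"
proof -
  have "\<And>P x (y::complex). (if P then x else 0) * y = (if P then x * y else 0)" by simp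
  then show ?thesis by (simp add: diag3_def matrix_vector_mult_def)
qed

lemma lin_ode_solution_diag3_shift:
  assumes "lin_ode_solution (diag3 a b c) x0 x"
  shows "x (t + h) $ i = exp (h *\<^sub>R (vector [a, b, c] :: complex^3) $ i) * x t $ i"
proof -
  define d where "d = (vector [a, b, c] :: complex^3) $ i"
  have "((\<lambda>t. x t $ i) has_vector_derivative d * x t $ i) (at t)" for t
  proof -
    have "(x has_vector_derivative (diag3 a b c *v x t)) (at t)"
      using assms unfolding lin_ode_solution_def by blast
    from bounded_linear.has_vector_derivative[OF bounded_linear_vec_nth this]
    show ?thesis by (simp add: diag3_mult_vec_nth d_def)
  qed
  then have component: "\<And>t. x t $ i = exp (t *\<^sub>R d) * x 0 $ i"
    by (rule has_vector_derivative_linear_imp_exp)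
  have "x (t + h) $ i = exp (h *\<^sub>R d) * (exp (t *\<^sub>R d) * x 0 $ i)"
    using component[of "t + h"] by (simp add: scaleR_add_left exp_add mult.assoc)
  also have "\<dots> = exp (h *\<^sub>R d) * x t $ i"
    using component[of t] by simp
  finally show ?thesis unfolding d_def .
qed

lemma exact_schemeI:
  assumes unique: "\<And>xk. \<exists>!xk1. S xk xk1"
    and exact_step: "\<And>x0 x t. lin_ode_solution M x0 x \<Longrightarrow> S (x t) (x (t + h))"
  shows "exact_scheme S h M"
  unfolding exact_scheme_def
proof (intro allI impI)
  fix x0 xs x k
  assume "xs 0 = x0 \<and> (\<forall>k. S (xs k) (xs (Suc k))) \<and> lin_ode_solution M x0 x"
  then have xs0: "xs 0 = x0" and xs_step: "\<And>k. S (xs k) (xs (Suc k))"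
    and sol: "lin_ode_solution M x0 x" by auto
  show "xs k = x (real k * h)"
  proof (induction k)
    case 0
    then show ?case using xs0 sol by (simp add: lin_ode_solution_def)
  next
    case (Suc k)
    have "S (xs k) (x (real (Suc k) * h))"
      using exact_step[OF sol, of "real k * h"] Suc by (simp add: algebra_simps)
    then show ?case using xs_step[of k] unique by blast
  qed
qed

lemma diag3_theta_scheme_exact:
  fixes a b c phi theta :: complex
  defines "lam \<equiv> vector [a, b, c] :: complex^3"
  assumes unique: "\<forall>xk. \<exists>!xk1. (1 / phi) *s (xk1 - xk) =
                        diag3 a b c *v (theta *s xk1 + (1 - theta) *s xk)"
    and scalar_exact: "\<And>i. (exp (h *\<^sub>R lam $ i) - 1) / phi =
                             lam $ i * (theta * (exp (h *\<^sub>R lam $ i) - 1) + 1)"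
  shows "exact_scheme
           (\<lambda>xk xk1. (1 / phi) *s (xk1 - xk) = diag3 a b c *v (theta *s xk1 + (1 - theta) *s xk))
           h (diag3 a b c)"
proof (rule exact_schemeI)
  fix x0 x t
  assume sol: "lin_ode_solution (diag3 a b c) x0 x"
  have "((1 / phi) *s (x (t + h) - x t)) $ i =
          (diag3 a b c *v (theta *s x (t + h) + (1 - theta) *s x t)) $ i" for i
  proof -
    define e where "e = exp (h *\<^sub>R lam $ i)"
    have shift: "x (t + h) $ i = e * x t $ i"
      using lin_ode_solution_diag3_shift[OF sol] unfolding e_def lam_def .
    have "(1 / phi) * (e * y - y) = lam $ i * (theta * (e * y) + (1 - theta) * y)" for y
    proof -
      have "(1 / phi) * (e * y - y) = (e - 1) / phi * y"
        by (simp add: diff_divide_distrib[symmetric] algebra_simps)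
      also have "\<dots> = lam $ i * (theta * (e - 1) + 1) * y" using scalar_exact e_def by simp
      finally show ?thesis by (simp add: algebra_simps)
    qed
    then have "(1 / phi) * (x (t + h) $ i - x t $ i) =
                 lam $ i * (theta * x (t + h) $ i + (1 - theta) * x t $ i)"
      unfolding shift .
    then show ?thesis by (simp add: diag3_mult_vec_nth lam_def diff_divide_distrib algebra_simps)
  qed
  then show "(1 / phi) *s (x (t + h) - x t) =
               diag3 a b c *v (theta *s x (t + h) + (1 - theta) *s x t)"
    by (simp add: vec_eq_iff)
qed (use unique in blast)

lemma theta_scheme_coefficients:
  fixes l2 l3 a b :: complex
  assumes P: "l2 * l3 * (a - b) \<noteq> 0" and D: "(l2 - l3) * (a - 1) * (b - 1) \<noteq> 0"
  defines "phi \<equiv> (l2 - l3) * (a - 1) * (b - 1) / (l2 * l3 * (a - b))"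
    and "theta \<equiv> (l3 * (a - 1) - l2 * (b - 1)) / ((l2 - l3) * (a - 1) * (b - 1))"
  shows "(a - 1) / phi = l2 * (theta * (a - 1) + 1)"
    and "(b - 1) / phi = l3 * (theta * (b - 1) + 1)"
  using P D unfolding phi_def theta_def by (simp_all add: field_simps)

theorem theorem5:
  fixes l2 l3 :: complex and h :: real and psi phi theta :: complex
  assumes "l2 \<noteq> 0" and "l3 \<noteq> 0" and "l2 \<noteq> l3" and "h > 0"
  defines "psi \<equiv> 1"
  defines "phi \<equiv> ((l2 - l3) * (exp (l2 * h) - 1) * (exp (l3 * h) - 1)) /
                  (l2 * l3 * (exp (l2 * h) - exp (l3 * h)))"
  defines "theta \<equiv> (l3 * (exp (l2 * h) - 1) - l2 * (exp (l3 * h) - 1)) /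
                  ((l2 - l3) * (exp (l2 * h) - 1) * (exp (l3 * h) - 1))"
  assumes "l2 * l3 * (exp (l2 * h) - exp (l3 * h)) \<noteq> 0"
      and "(l2 - l3) * (exp (l2 * h) - 1) * (exp (l3 * h) - 1) \<noteq> 0"
      and "phi \<noteq> 0"
  assumes "\<forall>xk. \<exists>!xk1. (1 / phi) *s (xk1 - psi *s xk) =
                        diag3 0 l2 l3 *v (theta *s xk1 + (1 - theta) *s xk)"
  shows "exact_scheme
           (\<lambda>xk xk1. (1 / phi) *s (xk1 - psi *s xk) =
                        diag3 0 l2 l3 *v (theta *s xk1 + (1 - theta) *s xk))
           h (diag3 0 l2 l3)"
proof -
  note coefficients = theta_scheme_coefficients[OF assms(8,9), folded phi_def theta_def]
  have "(exp (h *\<^sub>R (vector [0, l2, l3] :: complex^3) $ i) - 1) / phi =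
          (vector [0, l2, l3] :: complex^3) $ i *
            (theta * (exp (h *\<^sub>R (vector [0, l2, l3] :: complex^3) $ i) - 1) + 1)" for i
    using exhaust_3[of i] coefficients by (auto simp: scaleR_conv_of_real mult.commute)
  from diag3_theta_scheme_exact[OF _ this] assms(11) show ?thesis
    unfolding psi_def by simp
qed

end
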